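(* Let $n\geq 5$, let $S$ be the set of all $3$-cycles in $S_n$, let $CAG_n=\mathrm{Cay}(A_n,S)$, and let $G_e$ be the stabilizer of the identity vertex $e$ in $\mathrm{Aut}(CAG_n)$. For $1\leq i<j<k\leq n$ put $\Delta_{i,j,k}=\{(i,j,k),(i,k,j)\}$ and $\Delta=\{\Delta_{i,j,k}\mid 1\leq i<j<k\leq n\}$. Let $L_n$ be the graph with vertex set $\Delta$ in which $\Delta_{i,j,k}$ and $\Delta_{p,q,r}$ are adjacent iff $\{i,j,k\}\cap\{p,q,r\}=\emptyset$. Each $g\in G_e$ permutes the members of $\Delta$ (i.e. maps each $\Delta_{i,j,k}$ onto some member of $\Delta$), giving an action of $G_e$ on $\Delta$; let $K$ be the kernel of this action, so $G_e/K$ is a permutation group on $\Delta$. Then $G_e/K\leq\mathrm{Aut}(L_n)$, i.e. every permutation of $\Delta$ induced by an element of $G_e$ is an automorphism of $L_n$.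
   Context: For a finite group $\Gamma$ and a subset $T\subseteq\Gamma$ with $e\notin T$ and $T=T^{-1}$, the Cayley graph $\mathrm{Cay}(\Gamma,T)$ is the undirected graph with vertex set $\Gamma$ and edge set $\{\{\gamma,t\gamma\}\mid \gamma\in\Gamma, t\in T\}$. Elements of $G_e$ map $S$ (the neighbourhood of $e$) to itself. *)

theory Defs
  imports "HOL-Combinatorics.Permutations"
begin

text \<open>Permutations of {1..n} are functions nat => nat; composition is function
composition. The 3-cycle (a,b,c) maps a to b, b to c, c to a.\<close>

definition cyc3 :: "nat \<Rightarrow> nat \<Rightarrow> nat \<Rightarrow> (nat \<Rightarrow> nat)" where
  "cyc3 a b c = (\<lambda>x. if x = a then b else if x = b then c else if x = c then a else x)"

definition alt_group_set :: "nat \<Rightarrow> (nat \<Rightarrow> nat) set" where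
  "alt_group_set n = {p. p permutes {1..n} \<and> evenperm p}"

definition three_cycles :: "nat \<Rightarrow> (nat \<Rightarrow> nat) set" where
  "three_cycles n = {cyc3 a b c | a b c. a \<in> {1..n} \<and> b \<in> {1..n} \<and> c \<in> {1..n}
                         \<and> a \<noteq> b \<and> b \<noteq> c \<and> a \<noteq> c}"

definition CAG_adj :: "nat \<Rightarrow> (nat \<Rightarrow> nat) \<Rightarrow> (nat \<Rightarrow> nat) \<Rightarrow> bool" where
  "CAG_adj n x y \<longleftrightarrow> x \<in> alt_group_set n \<and> y \<in> alt_group_set n \<and>
      ((\<exists>t \<in> three_cycles n. y = t \<circ> x) \<or> (\<exists>t \<in> three_cycles n. x = t \<circ> y))"

definition CAG_aut :: "nat \<Rightarrow> ((nat \<Rightarrow> nat) \<Rightarrow> (nat \<Rightarrow> nat)) set" where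
  "CAG_aut n = {f. bij_betw f (alt_group_set n) (alt_group_set n) \<and>
      (\<forall>x \<in> alt_group_set n. \<forall>y \<in> alt_group_set n. CAG_adj n x y \<longleftrightarrow> CAG_adj n (f x) (f y))}"

definition CAG_stab :: "nat \<Rightarrow> ((nat \<Rightarrow> nat) \<Rightarrow> (nat \<Rightarrow> nat)) set" where
  "CAG_stab n = {f \<in> CAG_aut n. f id = id}"

definition Delta_ijk :: "nat \<Rightarrow> nat \<Rightarrow> nat \<Rightarrow> (nat \<Rightarrow> nat) set" where
  "Delta_ijk i j k = {cyc3 i j k, cyc3 i k j}"

definition Delta :: "nat \<Rightarrow> (nat \<Rightarrow> nat) set set" where
  "Delta n = {Delta_ijk i j k | i j k. 1 \<le> i \<and> i < j \<and> j < k \<and> k \<le> n}"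

definition L_adj :: "nat \<Rightarrow> (nat \<Rightarrow> nat) set \<Rightarrow> (nat \<Rightarrow> nat) set \<Rightarrow> bool" where
  "L_adj n D E \<longleftrightarrow> (\<exists>i j k p q r. 1 \<le> i \<and> i < j \<and> j < k \<and> k \<le> n \<and>
      1 \<le> p \<and> p < q \<and> q < r \<and> r \<le> n \<and>
      D = Delta_ijk i j k \<and> E = Delta_ijk p q r \<and> {i, j, k} \<inter> {p, q, r} = {})"

definition L_aut :: "nat \<Rightarrow> ((nat \<Rightarrow> nat) set \<Rightarrow> (nat \<Rightarrow> nat) set) \<Rightarrow> bool" where
  "L_aut n \<phi> \<longleftrightarrow> bij_betw \<phi> (Delta n) (Delta n) \<and>
      (\<forall>D \<in> Delta n. \<forall>E \<in> Delta n. L_adj n D E \<longleftrightarrow> L_adj n (\<phi> D) (\<phi> E))"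

end

theory Submission
  imports Defs
begin

text \<open>An automorphism \<open>g\<close> of \<open>CAG\<^sub>n\<close> fixing \<open>id\<close> permutes its neighbourhood, the set of
  three-cycles. In the graph induced on the three-cycles the edge from \<open>s\<close> to \<open>s\<^sup>2\<close> is, for
  \<open>n \<ge> 5\<close>, the only edge at \<open>s\<close> lying in no triangle; hence \<open>g (s\<^sup>2) = (g s)\<^sup>2\<close> and \<open>g\<close>
  permutes the blocks \<open>\<Delta>\<^sub>i\<^sub>j\<^sub>k = {s, s\<^sup>2}\<close>. Adjacent three-cycles move at least two common
  points, so two blocks have disjoint supports, i.e. are adjacent in \<open>L\<^sub>n\<close>, exactly when no
  three-cycle is adjacent to a member of each. This description is invariant under \<open>g\<close>.\<close>

definition moved :: "('a \<Rightarrow> 'a) \<Rightarrow> 'a set" where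
  "moved f = {x. f x \<noteq> x}"

lemma moved_cyc3: "a \<noteq> b \<Longrightarrow> b \<noteq> c \<Longrightarrow> a \<noteq> c \<Longrightarrow> moved (cyc3 a b c) = {a, b, c}"
  by (auto simp: moved_def cyc3_def)

lemma cyc3_rotate: "a \<noteq> b \<Longrightarrow> b \<noteq> c \<Longrightarrow> a \<noteq> c \<Longrightarrow> cyc3 a b c = cyc3 b c a"
  by (auto simp: cyc3_def fun_eq_iff)

lemma cyc3_comp_self: "a \<noteq> b \<Longrightarrow> b \<noteq> c \<Longrightarrow> a \<noteq> c \<Longrightarrow> cyc3 a b c \<circ> cyc3 a b c = cyc3 a c b"
  by (auto simp: cyc3_def fun_eq_iff)

lemma cyc3_comp_reverse: "a \<noteq> b \<Longrightarrow> b \<noteq> c \<Longrightarrow> a \<noteq> c \<Longrightarrow> cyc3 a c b \<circ> cyc3 a b c = id"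
  by (auto simp: cyc3_def fun_eq_iff)

lemma cyc3_comp_cyc3: "distinct [x, y, c, d] \<Longrightarrow> cyc3 x c d \<circ> cyc3 x y c = cyc3 x y d"
  by (auto simp: cyc3_def fun_eq_iff)

lemma cyc3_eq_transpose_comp:
  "a \<noteq> b \<Longrightarrow> b \<noteq> c \<Longrightarrow> a \<noteq> c \<Longrightarrow> cyc3 a b c = transpose a b \<circ> transpose b c"
  by (auto simp: cyc3_def fun_eq_iff transpose_def)

lemma cyc3_in_alt_group_set:
  "a \<in> {1..n} \<Longrightarrow> b \<in> {1..n} \<Longrightarrow> c \<in> {1..n} \<Longrightarrow> a \<noteq> b \<Longrightarrow> b \<noteq> c \<Longrightarrow> a \<noteq> c
    \<Longrightarrow> cyc3 a b c \<in> alt_group_set n"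
  unfolding alt_group_set_def cyc3_eq_transpose_comp
  by (auto intro!: permutes_compose permutes_swap_id
      simp: evenperm_comp evenperm_swap permutation_swap_id)

lemma cyc3_eq_if_same_points:
  assumes "a \<noteq> b" "b \<noteq> c" "a \<noteq> c" "x \<noteq> y" "y \<noteq> z" "x \<noteq> z" "{a, b, c} = {x, y, z}"
  shows "cyc3 a b c = cyc3 x y z \<or> cyc3 a b c = cyc3 x z y"
proof -
  obtain p q where pq: "cyc3 a b c = cyc3 x p q" "{x, p, q} = {a, b, c}" "x \<notin> {p, q}"
  proof -
    have "x \<in> {a, b, c}" using assms(7) by blast
    then consider "x = a" | "x = b" | "x = c" by blast
    then show thesis
    proof cases
      case 1 then show thesis using that[of b c] assms(1-3) by auto
    next
      case 2 then show thesis using that[of c a] assms(1-3) cyc3_rotate[of a b c] by auto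
    next
      case 3 then show thesis using that[of a b] assms(1-3) cyc3_rotate[of c a b] by auto
    qed
  qed
  have "{p, q} = {x, p, q} - {x}" using pq(3) by blast
  also have "\<dots> = {x, y, z} - {x}" using pq(2) assms(7) by simp
  also have "\<dots> = {y, z}" using assms(4,6) by blast
  finally show ?thesis using pq(1) by (auto simp: doubleton_eq_iff)
qed

lemma mem_three_cycles_iff:
  "s \<in> three_cycles n \<longleftrightarrow> (\<exists>a b c. a \<in> {1..n} \<and> b \<in> {1..n} \<and> c \<in> {1..n}
      \<and> a \<noteq> b \<and> b \<noteq> c \<and> a \<noteq> c \<and> s = cyc3 a b c)"
  unfolding three_cycles_def by blast

lemma cyc3_in_three_cycles:
  "a \<in> {1..n} \<Longrightarrow> b \<in> {1..n} \<Longrightarrow> c \<in> {1..n} \<Longrightarrow> a \<noteq> b \<Longrightarrow> b \<noteq> c \<Longrightarrow> a \<noteq> c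
    \<Longrightarrow> cyc3 a b c \<in> three_cycles n"
  unfolding mem_three_cycles_iff by blast

lemma three_cycles_subset_alt_group_set: "three_cycles n \<subseteq> alt_group_set n"
  using cyc3_in_alt_group_set unfolding three_cycles_def by blast

lemma moved_three_cycle:
  "s \<in> three_cycles n \<Longrightarrow> finite (moved s) \<and> card (moved s) = 3 \<and> moved s \<subseteq> {1..n}"
  unfolding mem_three_cycles_iff by (auto simp: moved_cyc3)

lemma three_cycle_square:
  assumes "s \<in> three_cycles n"
  shows "s \<circ> s \<in> three_cycles n" "moved (s \<circ> s) = moved s"
    "s \<circ> s \<circ> s = id" "(s \<circ> s) \<circ> (s \<circ> s) = s"
proof -
  obtain a b c where abc: "a \<in> {1..n}" "b \<in> {1..n}" "c \<in> {1..n}" "a \<noteq> b" "b \<noteq> c" "a \<noteq> c"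
    and s: "s = cyc3 a b c"
    using assms unfolding mem_three_cycles_iff by blast
  show "s \<circ> s \<in> three_cycles n" "moved (s \<circ> s) = moved s"
    using abc by (auto simp: s cyc3_comp_self moved_cyc3 intro: cyc3_in_three_cycles)
  show "s \<circ> s \<circ> s = id" "(s \<circ> s) \<circ> (s \<circ> s) = s"
    using abc by (auto simp: s cyc3_def fun_eq_iff)
qed

lemma three_cycle_eq_if_moved:
  assumes s: "s \<in> three_cycles n" and m: "moved s = {x, y, z}" and "x \<noteq> y" "y \<noteq> z" "x \<noteq> z"
  shows "s = cyc3 x y z \<or> s = cyc3 x z y"
proof -
  obtain a b c where "a \<noteq> b" "b \<noteq> c" "a \<noteq> c" "s = cyc3 a b c"
    using s unfolding mem_three_cycles_iff by blast
  with assms show ?thesis using cyc3_eq_if_same_points[of a b c x y z] by (simp add: moved_cyc3)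
qed

lemma three_cycles_eq_if_moved_eq:
  assumes r: "r \<in> three_cycles n" and s: "s \<in> three_cycles n" and "moved r = moved s"
  shows "r = s \<or> r = s \<circ> s"
proof -
  obtain a b c where abc: "a \<noteq> b" "b \<noteq> c" "a \<noteq> c" "s = cyc3 a b c"
    using s unfolding mem_three_cycles_iff by blast
  then have "moved r = {a, b, c}" using assms(3) by (simp add: moved_cyc3)
  from three_cycle_eq_if_moved[OF r this abc(1-3)] show ?thesis using abc by (auto simp: cyc3_comp_self)
qed

lemma three_cycles_moved_eq_if_card_inter:
  assumes r: "r \<in> three_cycles n" and s: "s \<in> three_cycles n" and c: "card (moved r \<inter> moved s) \<ge> 3"
  shows "moved r = moved s"
proof -
  have fr: "finite (moved r)" "card (moved r) = 3" and fs: "finite (moved s)" "card (moved s) = 3"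
    using moved_three_cycle r s by auto
  have "card (moved r \<inter> moved s) = 3"
    using c fr card_mono[of "moved r" "moved r \<inter> moved s"] by auto
  then have "moved r \<inter> moved s = moved r" "moved r \<inter> moved s = moved s"
    using fr fs card_subset_eq[of "moved r" "moved r \<inter> moved s"]
      card_subset_eq[of "moved s" "moved r \<inter> moved s"] by auto
  then show ?thesis by auto
qed

lemma CAG_adj_iff:
  "CAG_adj n x y \<longleftrightarrow> x \<in> alt_group_set n \<and> y \<in> alt_group_set n \<and> (\<exists>u\<in>three_cycles n. y = u \<circ> x)"
proof
  assume adj: "CAG_adj n x y"
  then have xy: "x \<in> alt_group_set n" "y \<in> alt_group_set n" unfolding CAG_adj_def by auto
  from adj consider "\<exists>u\<in>three_cycles n. y = u \<circ> x" | "\<exists>u\<in>three_cycles n. x = u \<circ> y"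
    unfolding CAG_adj_def by blast
  then show "x \<in> alt_group_set n \<and> y \<in> alt_group_set n \<and> (\<exists>u\<in>three_cycles n. y = u \<circ> x)"
  proof cases
    case 2
    then obtain u where u: "u \<in> three_cycles n" "x = u \<circ> y" by blast
    have "(u \<circ> u) \<circ> x = (u \<circ> u \<circ> u) \<circ> y" using u by (simp add: o_assoc)
    also have "\<dots> = y" using three_cycle_square[OF u(1)] by simp
    finally show ?thesis using xy three_cycle_square(1)[OF u(1)] by metis
  qed (use xy in auto)
qed (auto simp: CAG_adj_def)

lemma CAG_adj_irrefl: "\<not> CAG_adj n x x"
proof
  assume "CAG_adj n x x"
  then obtain u where u: "u \<in> three_cycles n" "x = u \<circ> x" and x: "x \<in> alt_group_set n"
    by (auto simp: CAG_adj_iff)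
  have "surj x" using x permutes_surj unfolding alt_group_set_def by blast
  then have "u = id" using u(2) by (metis comp_id fun.map_comp surj_iff)
  then show False using moved_three_cycle[OF u(1)] by (simp add: moved_def)
qed

lemma id_in_alt_group_set: "id \<in> alt_group_set n"
  unfolding alt_group_set_def by (simp add: permutes_id evenperm_id)

lemma CAG_adj_id_iff: "CAG_adj n id y \<longleftrightarrow> y \<in> three_cycles n"
  using id_in_alt_group_set three_cycles_subset_alt_group_set by (auto simp: CAG_adj_iff)

lemma CAG_adj_square: "s \<in> three_cycles n \<Longrightarrow> CAG_adj n s (s \<circ> s)"
  using three_cycle_square[of s n] three_cycles_subset_alt_group_set by (auto simp: CAG_adj_iff)

text \<open>If \<open>s = u \<circ> r\<close>, the points moved by exactly one of \<open>r\<close>, \<open>s\<close> are moved by \<open>u\<close>: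
  those of \<open>moved s - moved r\<close> and the images under \<open>r\<close> of those of \<open>moved r - moved s\<close>.
  These two sets are disjoint, so they cannot both have two elements.\<close>

lemma card_moved_inter_if_CAG_adj:
  assumes r: "r \<in> three_cycles n" and s: "s \<in> three_cycles n" and adj: "CAG_adj n r s"
  shows "card (moved r \<inter> moved s) \<ge> 2"
proof (rule ccontr)
  assume small: "\<not> ?thesis"
  obtain u where u: "u \<in> three_cycles n" "s = u \<circ> r" using adj by (auto simp: CAG_adj_iff)
  let ?R = "moved r" and ?S = "moved s" and ?U = "moved u"
  have fR: "finite ?R" "card ?R = 3" and fS: "finite ?S" "card ?S = 3" and fU: "finite ?U" "card ?U = 3"
    using moved_three_cycle r s u(1) by auto
  have "inj r" using r three_cycles_subset_alt_group_set permutes_inj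
    unfolding alt_group_set_def by blast
  have new: "?S - ?R \<subseteq> ?U" and lost: "r ` (?R - ?S) \<subseteq> ?U" using u(2) by (auto simp: moved_def)
  have "r ` (?R - ?S) \<subseteq> ?R" using \<open>inj r\<close> by (auto simp: moved_def inj_eq)
  then have disj: "(?S - ?R) \<inter> r ` (?R - ?S) = {}" by auto
  have cS: "card (?S - ?R) \<ge> 2"
    using small fS card_Diff_subset_Int[of ?S ?R] by (simp add: Int_commute)
  have cR: "card (r ` (?R - ?S)) \<ge> 2"
    using small fR card_Diff_subset_Int[of ?R ?S] card_image[of r "?R - ?S"] \<open>inj r\<close>
    by (simp add: inj_on_subset)
  have "card (?S - ?R) + card (r ` (?R - ?S)) = card ((?S - ?R) \<union> r ` (?R - ?S))"
    using disj fR fS by (intro card_Un_disjoint[symmetric]) auto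
  also have "\<dots> \<le> card ?U" using new lost fU by (intro card_mono) auto
  finally show False using cS cR fU by simp
qed

lemma card_moved_inter_if_CAG_adj_or_square:
  "r \<in> three_cycles n \<Longrightarrow> s \<in> three_cycles n \<Longrightarrow> CAG_adj n r s \<or> CAG_adj n r (s \<circ> s)
    \<Longrightarrow> card (moved r \<inter> moved s) \<ge> 2"
  using card_moved_inter_if_CAG_adj[of r n s] card_moved_inter_if_CAG_adj[of r n "s \<circ> s"]
    three_cycle_square[of s n] by auto

lemma CAG_adj_cyc3_cyc3:
  assumes "p \<in> {1..n}" "q \<in> {1..n}" "c \<in> {1..n}" "d \<in> {1..n}" "distinct [p, q, c, d]"
  shows "CAG_adj n (cyc3 p q c) (cyc3 p q d)"
proof -
  have "cyc3 p q d = cyc3 p c d \<circ> cyc3 p q c" using cyc3_comp_cyc3 assms(5) by metis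
  moreover have "cyc3 p c d \<in> three_cycles n" "cyc3 p q d \<in> three_cycles n" "cyc3 p q c \<in> three_cycles n"
    using assms by (auto intro: cyc3_in_three_cycles)
  ultimately show ?thesis using three_cycles_subset_alt_group_set by (auto simp: CAG_adj_iff)
qed

lemma not_CAG_adj_cyc3_cyc3:
  assumes "distinct [p, q, c, d]"
  shows "\<not> CAG_adj n (cyc3 p q c) (cyc3 p d q)"
proof
  assume "CAG_adj n (cyc3 p q c) (cyc3 p d q)"
  then obtain u where u: "u \<in> three_cycles n" "cyc3 p d q = u \<circ> cyc3 p q c" by (auto simp: CAG_adj_iff)
  then have "cyc3 p d q \<circ> cyc3 p c q = u \<circ> (cyc3 p q c \<circ> cyc3 p c q)" by (simp add: o_assoc)
  also have "cyc3 p q c \<circ> cyc3 p c q = id" using cyc3_comp_reverse[of p c q] assms by auto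
  finally have "u = cyc3 p d q \<circ> cyc3 p c q" by (simp add: o_def)
  then have "{p, q, c, d} \<subseteq> moved u" using assms by (auto simp: moved_def cyc3_def)
  then have "card {p, q, c, d} \<le> card (moved u)" using moved_three_cycle[OF u(1)] by (intro card_mono) auto
  then show False using assms moved_three_cycle[OF u(1)] by simp
qed

lemma CAG_adj_cyc3_cases:
  assumes "p \<in> {1..n}" "q \<in> {1..n}" "c \<in> {1..n}" "d \<in> {1..n}" "distinct [p, q, c, d]"
  shows "CAG_adj n (cyc3 p q c) (cyc3 p q d)" "\<not> CAG_adj n (cyc3 p q c) (cyc3 p d q)"
    "CAG_adj n (cyc3 p c q) (cyc3 p d q)" "\<not> CAG_adj n (cyc3 p c q) (cyc3 p q d)"
proof -
  show "CAG_adj n (cyc3 p q c) (cyc3 p q d)" "\<not> CAG_adj n (cyc3 p q c) (cyc3 p d q)"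
    using CAG_adj_cyc3_cyc3 not_CAG_adj_cyc3_cyc3 assms by blast+
  have rot: "cyc3 p c q = cyc3 q p c" "cyc3 p d q = cyc3 q p d" "cyc3 p q d = cyc3 q d p"
    using assms cyc3_rotate[of p c q] cyc3_rotate[of c q p] cyc3_rotate[of p d q]
      cyc3_rotate[of d q p] cyc3_rotate[of p q d]
    by (simp_all del: cyc3_rotate)
  show "CAG_adj n (cyc3 p c q) (cyc3 p d q)" "\<not> CAG_adj n (cyc3 p c q) (cyc3 p q d)"
    unfolding rot using CAG_adj_cyc3_cyc3[of q n p c d] not_CAG_adj_cyc3_cyc3[of q p c d n] assms
    by auto
qed

lemma three_cycles_sharing_two_points:
  assumes r: "r \<in> three_cycles n" and s: "s \<in> three_cycles n" and two: "card (moved r \<inter> moved s) = 2"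
  obtains p q c d where "p \<in> {1..n}" "q \<in> {1..n}" "c \<in> {1..n}" "d \<in> {1..n}" "distinct [p, q, c, d]"
    "r = cyc3 p q c \<or> r = cyc3 p c q" "s = cyc3 p q d \<or> s = cyc3 p d q"
proof -
  obtain p q where pq: "moved r \<inter> moved s = {p, q}" "p \<noteq> q" using two by (metis card_2_iff)
  have fr: "finite (moved r)" "card (moved r) = 3" "moved r \<subseteq> {1..n}"
    and fs: "finite (moved s)" "card (moved s) = 3" "moved s \<subseteq> {1..n}"
    using moved_three_cycle[OF r] moved_three_cycle[OF s] by auto
  have pqr: "{p, q} \<subseteq> moved r" and pqs: "{p, q} \<subseteq> moved s" using pq(1) by blast+
  have "card (moved r - {p, q}) = 1" using card_Diff_subset[OF _ pqr] fr(2) pq(2) by simp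
  then obtain c where c: "moved r - {p, q} = {c}" by (metis One_nat_def card_1_singleton_iff)
  have "card (moved s - {p, q}) = 1" using card_Diff_subset[OF _ pqs] fs(2) pq(2) by simp
  then obtain d where d: "moved s - {p, q} = {d}" by (metis One_nat_def card_1_singleton_iff)
  have mr: "moved r = {p, q, c}" using c pqr by blast
  have ms: "moved s = {p, q, d}" using d pqs by blast
  have "c \<noteq> d" using pq(1) c d by blast
  then have dist: "distinct [p, q, c, d]" using c d pq(2) by auto
  show thesis
  proof (rule that)
    show "p \<in> {1..n}" "q \<in> {1..n}" "c \<in> {1..n}" "d \<in> {1..n}" using mr ms fr(3) fs(3) by blast+
    show "r = cyc3 p q c \<or> r = cyc3 p c q" using three_cycle_eq_if_moved[OF r mr] dist by simp
    show "s = cyc3 p q d \<or> s = cyc3 p d q" using three_cycle_eq_if_moved[OF s ms] dist by simp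
  qed (use dist in simp)
qed

lemma CAG_adj_exactly_one_if_sharing_two_points:
  assumes r: "r \<in> three_cycles n" and s: "s \<in> three_cycles n" and two: "card (moved r \<inter> moved s) = 2"
  shows "CAG_adj n r s \<longleftrightarrow> \<not> CAG_adj n r (s \<circ> s)"
proof -
  obtain p q c d where pqcd: "p \<in> {1..n}" "q \<in> {1..n}" "c \<in> {1..n}" "d \<in> {1..n}" "distinct [p, q, c, d]"
    and "r = cyc3 p q c \<or> r = cyc3 p c q" "s = cyc3 p q d \<or> s = cyc3 p d q"
    using three_cycles_sharing_two_points[OF r s two] by blast
  moreover have "cyc3 p q d \<circ> cyc3 p q d = cyc3 p d q" "cyc3 p d q \<circ> cyc3 p d q = cyc3 p q d"
    using cyc3_comp_self pqcd(5) by auto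
  ultimately show ?thesis using CAG_adj_cyc3_cases[OF pqcd] by auto
qed

lemma not_CAG_adj_three_cycle_and_square:
  assumes s: "s \<in> three_cycles n" and r: "r \<in> three_cycles n"
  shows "\<not> (CAG_adj n r s \<and> CAG_adj n r (s \<circ> s))"
proof
  assume adj: "CAG_adj n r s \<and> CAG_adj n r (s \<circ> s)"
  have "card (moved r \<inter> moved s) \<ge> 2" using card_moved_inter_if_CAG_adj r s adj by blast
  moreover have "card (moved r \<inter> moved s) \<noteq> 2"
    using CAG_adj_exactly_one_if_sharing_two_points[OF r s] adj by blast
  ultimately have "moved r = moved s" using three_cycles_moved_eq_if_card_inter[OF r s] by simp
  then have "r = s \<or> r = s \<circ> s" using three_cycles_eq_if_moved_eq r s by blast
  then show False using adj CAG_adj_irrefl by metis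
qed

text \<open>A fifth point \<open>e\<close> is needed for the common neighbour \<open>cyc3 p q e\<close> or \<open>cyc3 p e q\<close>.\<close>

lemma CAG_adj_three_cycles_in_triangle:
  assumes n: "n \<ge> 5" and s: "s \<in> three_cycles n" and t: "t \<in> three_cycles n"
    and adj: "CAG_adj n s t" and ne: "t \<noteq> s \<circ> s"
  shows "\<exists>x\<in>three_cycles n. CAG_adj n x s \<and> CAG_adj n x t"
proof -
  have "card (moved s \<inter> moved t) = 2"
  proof (rule ccontr)
    assume "card (moved s \<inter> moved t) \<noteq> 2"
    then have "moved t = moved s"
      using card_moved_inter_if_CAG_adj[OF s t adj] three_cycles_moved_eq_if_card_inter[OF s t] by simp
    then have "t = s \<or> t = s \<circ> s" using three_cycles_eq_if_moved_eq t s by blast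
    then show False using adj CAG_adj_irrefl ne by metis
  qed
  then obtain p q c d where pqcd: "p \<in> {1..n}" "q \<in> {1..n}" "c \<in> {1..n}" "d \<in> {1..n}" "distinct [p, q, c, d]"
    and st: "s = cyc3 p q c \<or> s = cyc3 p c q" "t = cyc3 p q d \<or> t = cyc3 p d q"
    using three_cycles_sharing_two_points[OF s t] by blast
  have "\<not> {1..n} \<subseteq> {p, q, c, d}"
  proof
    assume "{1..n} \<subseteq> {p, q, c, d}"
    then have "card {1..n} \<le> card {p, q, c, d}" by (intro card_mono) auto
    also have "\<dots> \<le> 4" using card_length[of "[p, q, c, d]"] by simp
    finally show False using n by simp
  qed
  then obtain e where e: "e \<in> {1..n}" "e \<notin> {p, q, c, d}" by blast
  have dist: "distinct [p, q, e, c]" "distinct [p, q, e, d]" using pqcd(5) e by auto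
  have "cyc3 p q e \<in> three_cycles n" "cyc3 p e q \<in> three_cycles n"
    using pqcd e dist by (auto intro: cyc3_in_three_cycles)
  then show ?thesis
    using st adj CAG_adj_cyc3_cases[OF pqcd] CAG_adj_cyc3_cases[OF pqcd(1,2) e(1) pqcd(3) dist(1)]
      CAG_adj_cyc3_cases[OF pqcd(1,2) e(1) pqcd(4) dist(2)] by blast
qed

lemma three_cycle_sharing_two_points_with_both:
  assumes s: "s \<in> three_cycles n" and t: "t \<in> three_cycles n" and one: "card (moved s \<inter> moved t) = 1"
  shows "\<exists>r\<in>three_cycles n. card (moved r \<inter> moved s) = 2 \<and> card (moved r \<inter> moved t) = 2"
proof -
  have fs: "card (moved s) = 3" "moved s \<subseteq> {1..n}" and ft: "card (moved t) = 3" "moved t \<subseteq> {1..n}"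
    using moved_three_cycle[OF s] moved_three_cycle[OF t] by auto
  obtain x where x: "moved s \<inter> moved t = {x}" using one by (metis One_nat_def card_1_singleton_iff)
  have "moved s - moved t \<noteq> {}"
  proof
    assume "moved s - moved t = {}"
    then have "moved s \<inter> moved t = moved s" by blast
    then show False using one fs(1) by simp
  qed
  moreover have "moved t - moved s \<noteq> {}"
  proof
    assume "moved t - moved s = {}"
    then have "moved s \<inter> moved t = moved t" by blast
    then show False using one ft(1) by simp
  qed
  ultimately obtain b d where b: "b \<in> moved s - moved t" and d: "d \<in> moved t - moved s" by blast
  have "x \<noteq> b" "x \<noteq> d" "b \<noteq> d" using x b d by auto
  moreover have "x \<in> {1..n}" "b \<in> {1..n}" "d \<in> {1..n}" using x b d fs(2) ft(2) by blast+
  ultimately have r: "cyc3 x b d \<in> three_cycles n" and mr: "moved (cyc3 x b d) = {x, b, d}"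
    by (simp_all add: cyc3_in_three_cycles moved_cyc3)
  have "moved (cyc3 x b d) \<inter> moved s = {x, b}" "moved (cyc3 x b d) \<inter> moved t = {x, d}"
    using mr x b d by auto
  then have "card (moved (cyc3 x b d) \<inter> moved s) = 2" "card (moved (cyc3 x b d) \<inter> moved t) = 2"
    using \<open>x \<noteq> b\<close> \<open>x \<noteq> d\<close> by simp_all
  then show ?thesis using r by blast
qed

definition has_common_three_cycle_neighbour ::
    "nat \<Rightarrow> (nat \<Rightarrow> nat) set \<Rightarrow> (nat \<Rightarrow> nat) set \<Rightarrow> bool" where
  "has_common_three_cycle_neighbour n D E \<longleftrightarrow>
     (\<exists>r\<in>three_cycles n. (\<exists>d\<in>D. CAG_adj n r d) \<and> (\<exists>e\<in>E. CAG_adj n r e))"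

lemma has_common_three_cycle_neighbour_iff:
  assumes s: "s \<in> three_cycles n" and t: "t \<in> three_cycles n"
  shows "has_common_three_cycle_neighbour n {s, s \<circ> s} {t, t \<circ> t} \<longleftrightarrow> moved s \<inter> moved t \<noteq> {}"
proof
  assume "has_common_three_cycle_neighbour n {s, s \<circ> s} {t, t \<circ> t}"
  then obtain r where r: "r \<in> three_cycles n"
    and "CAG_adj n r s \<or> CAG_adj n r (s \<circ> s)" "CAG_adj n r t \<or> CAG_adj n r (t \<circ> t)"
    unfolding has_common_three_cycle_neighbour_def by blast
  then have cs: "card (moved r \<inter> moved s) \<ge> 2" and ct: "card (moved r \<inter> moved t) \<ge> 2"
    using card_moved_inter_if_CAG_adj_or_square[OF r s] card_moved_inter_if_CAG_adj_or_square[OF r t] by auto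
  have fr: "finite (moved r)" "card (moved r) = 3" using moved_three_cycle[OF r] by auto
  show "moved s \<inter> moved t \<noteq> {}"
  proof
    assume disj: "moved s \<inter> moved t = {}"
    have "card (moved r \<inter> moved s) + card (moved r \<inter> moved t)
        = card ((moved r \<inter> moved s) \<union> (moved r \<inter> moved t))"
      using disj fr by (intro card_Un_disjoint[symmetric]) auto
    also have "\<dots> \<le> card (moved r)" using fr by (intro card_mono) auto
    finally show False using cs ct fr by simp
  qed
next
  assume meet: "moved s \<inter> moved t \<noteq> {}"
  have "finite (moved s)" using moved_three_cycle[OF s] by blast
  then have "card (moved s \<inter> moved t) \<ge> 1" using meet by (simp add: Suc_le_eq card_gt_0_iff)
  then consider "card (moved s \<inter> moved t) = 1" | "card (moved s \<inter> moved t) = 2"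
    | "card (moved s \<inter> moved t) \<ge> 3" by linarith
  then show "has_common_three_cycle_neighbour n {s, s \<circ> s} {t, t \<circ> t}"
  proof cases
    case 1
    then obtain r where r: "r \<in> three_cycles n"
      and "card (moved r \<inter> moved s) = 2" "card (moved r \<inter> moved t) = 2"
      using three_cycle_sharing_two_points_with_both[OF s t] by blast
    then show ?thesis unfolding has_common_three_cycle_neighbour_def
      using CAG_adj_exactly_one_if_sharing_two_points[OF r s]
        CAG_adj_exactly_one_if_sharing_two_points[OF r t] by blast
  next
    case 2
    then have "CAG_adj n s t \<or> CAG_adj n s (t \<circ> t)"
      using CAG_adj_exactly_one_if_sharing_two_points[OF s t] by blast
    then show ?thesis unfolding has_common_three_cycle_neighbour_def using s CAG_adj_square[OF s] by blast
  next
    case 3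
    then have "moved s = moved t" using three_cycles_moved_eq_if_card_inter[OF s t] by blast
    then have "s = t \<or> s = t \<circ> t" using three_cycles_eq_if_moved_eq s t by blast
    then show ?thesis unfolding has_common_three_cycle_neighbour_def using t CAG_adj_square[OF t] by blast
  qed
qed

lemma CAG_stab_adj_iff:
  "g \<in> CAG_stab n \<Longrightarrow> x \<in> alt_group_set n \<Longrightarrow> y \<in> alt_group_set n
    \<Longrightarrow> CAG_adj n (g x) (g y) \<longleftrightarrow> CAG_adj n x y"
  unfolding CAG_stab_def CAG_aut_def by auto

lemma CAG_stab_adj_iff_three_cycles:
  "g \<in> CAG_stab n \<Longrightarrow> x \<in> three_cycles n \<Longrightarrow> y \<in> three_cycles n
    \<Longrightarrow> CAG_adj n (g x) (g y) \<longleftrightarrow> CAG_adj n x y"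
  using three_cycles_subset_alt_group_set by (intro CAG_stab_adj_iff) auto

lemma CAG_stab_image_three_cycles:
  assumes g: "g \<in> CAG_stab n"
  shows "g ` three_cycles n = three_cycles n"
proof
  have bij: "bij_betw g (alt_group_set n) (alt_group_set n)" and "g id = id"
    using g unfolding CAG_stab_def CAG_aut_def by auto
  have mem: "g x \<in> three_cycles n \<longleftrightarrow> x \<in> three_cycles n" if "x \<in> alt_group_set n" for x
    using CAG_stab_adj_iff[OF g id_in_alt_group_set that] \<open>g id = id\<close> CAG_adj_id_iff by metis
  show "g ` three_cycles n \<subseteq> three_cycles n"
    using mem three_cycles_subset_alt_group_set by blast
  show "three_cycles n \<subseteq> g ` three_cycles n"
  proof
    fix t assume t: "t \<in> three_cycles n"
    then obtain x where "x \<in> alt_group_set n" "t = g x"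
      using bij three_cycles_subset_alt_group_set unfolding bij_betw_def by blast
    then show "t \<in> g ` three_cycles n" using mem t by blast
  qed
qed

text \<open>The edge \<open>{s, s \<circ> s}\<close> lies in no triangle of three-cycles, whereas every other
  edge from \<open>s\<close> does; an automorphism fixing \<open>id\<close> must therefore preserve these edges.\<close>

lemma CAG_stab_square:
  assumes n: "n \<ge> 5" and g: "g \<in> CAG_stab n" and s: "s \<in> three_cycles n"
  shows "g (s \<circ> s) = g s \<circ> g s"
proof (rule ccontr)
  assume ne: "g (s \<circ> s) \<noteq> g s \<circ> g s"
  have s2: "s \<circ> s \<in> three_cycles n" using three_cycle_square[OF s] by blast
  have T: "g ` three_cycles n = three_cycles n" using CAG_stab_image_three_cycles[OF g] .
  note adj_iff = CAG_stab_adj_iff_three_cycles[OF g]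
  have "CAG_adj n (g s) (g (s \<circ> s))" using adj_iff[OF s s2] CAG_adj_square[OF s] by blast
  moreover have "g s \<in> three_cycles n" "g (s \<circ> s) \<in> three_cycles n" using s s2 T by blast+
  ultimately obtain x where x: "x \<in> three_cycles n" "CAG_adj n x (g s)" "CAG_adj n x (g (s \<circ> s))"
    using CAG_adj_three_cycles_in_triangle[OF n _ _ _ ne] by blast
  then obtain y where y: "y \<in> three_cycles n" "x = g y" using T by blast
  then have "CAG_adj n y s" "CAG_adj n y (s \<circ> s)" using x adj_iff[OF y(1) s] adj_iff[OF y(1) s2] by simp_all
  then show False using not_CAG_adj_three_cycle_and_square[OF s y(1)] by blast
qed

lemma CAG_stab_has_common_three_cycle_neighbour:
  assumes g: "g \<in> CAG_stab n" and D: "D \<subseteq> three_cycles n" and E: "E \<subseteq> three_cycles n"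
  shows "has_common_three_cycle_neighbour n (g ` D) (g ` E) \<longleftrightarrow> has_common_three_cycle_neighbour n D E"
proof -
  note adj_iff = CAG_stab_adj_iff_three_cycles[OF g]
  have "has_common_three_cycle_neighbour n (g ` D) (g ` E) \<longleftrightarrow>
      (\<exists>r\<in>g ` three_cycles n. (\<exists>d\<in>D. CAG_adj n r (g d)) \<and> (\<exists>e\<in>E. CAG_adj n r (g e)))"
    unfolding has_common_three_cycle_neighbour_def CAG_stab_image_three_cycles[OF g] by blast
  also have "\<dots> \<longleftrightarrow>
      (\<exists>r\<in>three_cycles n. (\<exists>d\<in>D. CAG_adj n (g r) (g d)) \<and> (\<exists>e\<in>E. CAG_adj n (g r) (g e)))"
    by blast
  also have "\<dots> \<longleftrightarrow> has_common_three_cycle_neighbour n D E"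
    unfolding has_common_three_cycle_neighbour_def using adj_iff D E by (meson subsetD)
  finally show ?thesis .
qed

lemma Delta_iff: "D \<in> Delta n \<longleftrightarrow> (\<exists>s\<in>three_cycles n. D = {s, s \<circ> s})"
proof
  assume "D \<in> Delta n"
  then obtain i j k where ijk: "1 \<le> i" "i < j" "j < k" "k \<le> n" "D = Delta_ijk i j k"
    unfolding Delta_def by blast
  then have "cyc3 i j k \<in> three_cycles n" by (intro cyc3_in_three_cycles) auto
  moreover have "D = {cyc3 i j k, cyc3 i j k \<circ> cyc3 i j k}"
    using ijk by (simp add: Delta_ijk_def cyc3_comp_self)
  ultimately show "\<exists>s\<in>three_cycles n. D = {s, s \<circ> s}" by blast
next
  assume "\<exists>s\<in>three_cycles n. D = {s, s \<circ> s}"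
  then obtain s where s: "s \<in> three_cycles n" "D = {s, s \<circ> s}" by blast
  obtain a b c where abc: "a \<noteq> b" "b \<noteq> c" "a \<noteq> c" "s = cyc3 a b c"
    using s(1) unfolding mem_three_cycles_iff by blast
  obtain i j k :: nat where ijk: "i < j" "j < k" "{a, b, c} = {i, j, k}"
    using abc(1-3) by (metis insert_commute linorder_neqE_nat)
  have ms: "moved s = {i, j, k}" using abc ijk by (simp add: moved_cyc3)
  then have "1 \<le> i" "k \<le> n" using moved_three_cycle[OF s(1)] by auto
  moreover have "s = cyc3 i j k \<or> s = cyc3 i k j" using three_cycle_eq_if_moved[OF s(1) ms] ijk by simp
  then have "D = Delta_ijk i j k"
    using s(2) ijk cyc3_comp_self[of i j k] cyc3_comp_self[of i k j]
    unfolding Delta_ijk_def by (auto simp: insert_commute)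
  ultimately show "D \<in> Delta n" using ijk unfolding Delta_def by blast
qed

lemma moved_mem_Delta_ijk: "f \<in> Delta_ijk i j k \<Longrightarrow> i < j \<Longrightarrow> j < k \<Longrightarrow> moved f = {i, j, k}"
  unfolding Delta_ijk_def using moved_cyc3[of i j k] moved_cyc3[of i k j] by auto

lemma L_adj_iff_disjoint_moved:
  assumes D: "D \<in> Delta n" and E: "E \<in> Delta n" and s: "s \<in> D" and t: "t \<in> E"
  shows "L_adj n D E \<longleftrightarrow> moved s \<inter> moved t = {}"
proof
  assume "L_adj n D E"
  then obtain i j k p q r where "i < j" "j < k" "p < q" "q < r" "D = Delta_ijk i j k" "E = Delta_ijk p q r"
    "{i, j, k} \<inter> {p, q, r} = {}" unfolding L_adj_def by blast
  then show "moved s \<inter> moved t = {}"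
    using moved_mem_Delta_ijk[of s i j k] moved_mem_Delta_ijk[of t p q r] s t by simp
next
  assume disj: "moved s \<inter> moved t = {}"
  obtain i j k where ijk: "1 \<le> i" "i < j" "j < k" "k \<le> n" "D = Delta_ijk i j k"
    using D unfolding Delta_def by blast
  obtain p q r where pqr: "1 \<le> p" "p < q" "q < r" "r \<le> n" "E = Delta_ijk p q r"
    using E unfolding Delta_def by blast
  have "{i, j, k} \<inter> {p, q, r} = {}"
    using moved_mem_Delta_ijk[of s i j k] moved_mem_Delta_ijk[of t p q r] s t ijk pqr disj by simp
  then show "L_adj n D E" unfolding L_adj_def using ijk pqr by blast
qed

lemma Delta_subset_three_cycles: "D \<in> Delta n \<Longrightarrow> D \<subseteq> three_cycles n"
  unfolding Delta_iff using three_cycle_square(1) by auto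

lemma L_adj_iff_no_common_three_cycle_neighbour:
  assumes "D \<in> Delta n" "E \<in> Delta n"
  shows "L_adj n D E \<longleftrightarrow> \<not> has_common_three_cycle_neighbour n D E"
proof -
  obtain s t where st: "s \<in> three_cycles n" "t \<in> three_cycles n" "D = {s, s \<circ> s}" "E = {t, t \<circ> t}"
    using assms Delta_iff by metis
  then have "L_adj n D E \<longleftrightarrow> moved s \<inter> moved t = {}"
    using L_adj_iff_disjoint_moved[OF assms] by blast
  then show ?thesis using has_common_three_cycle_neighbour_iff st by simp
qed

lemma Delta_eq_image: "Delta n = (\<lambda>s. {s, s \<circ> s}) ` three_cycles n"
  using Delta_iff by blast

lemma CAG_stab_image_Delta:
  assumes "n \<ge> 5" and g: "g \<in> CAG_stab n"
  shows "(\<lambda>D. g ` D) ` Delta n = Delta n"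
proof -
  have "(\<lambda>D. g ` D) ` Delta n = (\<lambda>s. {g s, g s \<circ> g s}) ` three_cycles n"
    unfolding Delta_eq_image image_image using CAG_stab_square[OF assms] by (intro image_cong) auto
  also have "\<dots> = (\<lambda>s. {s, s \<circ> s}) ` g ` three_cycles n"
    by (simp add: image_image)
  finally show ?thesis unfolding CAG_stab_image_three_cycles[OF g] Delta_eq_image .
qed

theorem lemma3p5:
  fixes n :: nat and g :: "(nat \<Rightarrow> nat) \<Rightarrow> (nat \<Rightarrow> nat)"
  assumes "n \<ge> 5" and "g \<in> CAG_stab n"
  shows "(\<forall>D \<in> Delta n. g ` D \<in> Delta n) \<and> L_aut n (\<lambda>D. g ` D)"
proof -
  have image: "(\<lambda>D. g ` D) ` Delta n = Delta n" using CAG_stab_image_Delta[OF assms] .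
  have "inj_on g (alt_group_set n)"
    using assms(2) unfolding CAG_stab_def CAG_aut_def bij_betw_def by blast
  moreover have "D \<subseteq> alt_group_set n" if "D \<in> Delta n" for D
    using Delta_subset_three_cycles[OF that] three_cycles_subset_alt_group_set by blast
  ultimately have inj: "inj_on (\<lambda>D. g ` D) (Delta n)"
    by (metis (no_types, lifting) inj_onI inj_on_image_eq_iff)
  have "L_adj n (g ` D) (g ` E) \<longleftrightarrow> L_adj n D E" if D: "D \<in> Delta n" and E: "E \<in> Delta n" for D E
  proof -
    have "g ` D \<in> Delta n" "g ` E \<in> Delta n" using image D E by blast+
    then have "L_adj n (g ` D) (g ` E) \<longleftrightarrow> \<not> has_common_three_cycle_neighbour n (g ` D) (g ` E)"
      by (rule L_adj_iff_no_common_three_cycle_neighbour)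
    also have "\<dots> \<longleftrightarrow> \<not> has_common_three_cycle_neighbour n D E"
      using CAG_stab_has_common_three_cycle_neighbour[OF assms(2)] Delta_subset_three_cycles D E by blast
    also have "\<dots> \<longleftrightarrow> L_adj n D E" using L_adj_iff_no_common_three_cycle_neighbour[OF D E] by blast
    finally show ?thesis .
  qed
  then show ?thesis using image inj unfolding L_aut_def bij_betw_def by blast
qed

end
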